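(* Let $X,X',Y,Y'$ be integer-valued random variables such that $X'$ and $Y'$ take values in $\{0,1\}$, $X\succeq Y$, and for all $x\in\mathbb{Z}$, $(X'\mid X=x)\succeq(Y'\mid Y=x)$. Then $X+X'\succeq Y+Y'$.
   Context: For real random variables, $X\succeq Y$ ($X$ stochastically dominates $Y$) means $\Pr[X\ge x]\ge\Pr[Y\ge x]$ for all real $x$; $(X'\mid X=x)$ denotes the conditional distribution of $X'$ given $X=x$. *)

theory Defs
  imports "HOL-Probability.Probability"
begin

definition stoch_dom :: "'a measure \<Rightarrow> ('a \<Rightarrow> int) \<Rightarrow> 'b measure \<Rightarrow> ('b \<Rightarrow> int) \<Rightarrow> bool" where
  "stoch_dom M X N Y \<longleftrightarrow>
     (\<forall>t::real. measure M {\<omega> \<in> space M. t \<le> real_of_int (X \<omega>)}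
               \<ge> measure N {\<omega> \<in> space N. t \<le> real_of_int (Y \<omega>)})"

end

theory Submission
  imports Defs
begin

text \<open>Write a = Pr[X \<ge> s], b = Pr[X = s - 1] and p = Pr[X' = 1 | X = s - 1]. Since X' is
  0/1-valued, Pr[X + X' \<ge> s] = a + p b = (1 - p) a + p (a + b), a convex combination of two
  tails of X that is increasing in p. The same holds for Y, Y' with a', b', q. Dominance of
  X over Y gives a' \<le> a and a' + b' \<le> a + b, conditional dominance gives q \<le> p, hence
  a' + q b' \<le> a + q b \<le> a + p b.\<close>

lemma stoch_dom_iff_int_thresholds:
  "stoch_dom M X N Y \<longleftrightarrow>
     (\<forall>s::int. measure N {\<omega> \<in> space N. s \<le> Y \<omega>} \<le> measure M {\<omega> \<in> space M. s \<le> X \<omega>})"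
proof
  assume "stoch_dom M X N Y"
  then show "\<forall>s::int. measure N {\<omega> \<in> space N. s \<le> Y \<omega>} \<le> measure M {\<omega> \<in> space M. s \<le> X \<omega>}"
    unfolding stoch_dom_def by (auto dest: spec[of _ "real_of_int _"])
next
  assume int_dom: "\<forall>s::int. measure N {\<omega> \<in> space N. s \<le> Y \<omega>} \<le> measure M {\<omega> \<in> space M. s \<le> X \<omega>}"
  show "stoch_dom M X N Y"
    unfolding stoch_dom_def
  proof
    fix t :: real
    have "t \<le> real_of_int z \<longleftrightarrow> \<lceil>t\<rceil> \<le> z" for z :: int
      by (simp add: ceiling_le_iff)
    then show "measure N {\<omega> \<in> space N. t \<le> real_of_int (Y \<omega>)}
        \<le> measure M {\<omega> \<in> space M. t \<le> real_of_int (X \<omega>)}"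
      using int_dom[rule_format, of "\<lceil>t\<rceil>"] by simp
  qed
qed

lemma convex_tail_mono:
  fixes a b a' b' p q :: real
  assumes "a' \<le> a" "a' + b' \<le> a + b" "0 \<le> b" "0 \<le> q" "q \<le> 1" "q \<le> p"
  shows "a' + q * b' \<le> a + p * b"
proof -
  have "a' + q * b' = (1 - q) * a' + q * (a' + b')"
    by (simp add: algebra_simps)
  also have "\<dots> \<le> (1 - q) * a + q * (a + b)"
    using assms by (intro add_mono[OF mult_left_mono mult_left_mono]) simp_all
  also have "\<dots> = a + q * b"
    by (simp add: algebra_simps)
  also have "\<dots> \<le> a + p * b"
    using assms by (simp add: mult_right_mono)
  finally show ?thesis .
qed

lemma tail_add_ratio_mono:
  fixes a b c a' b' c' :: real
  assumes "a' \<le> a" "a' + b' \<le> a + b" "0 \<le> c" "c \<le> b" "0 \<le> c'" "c' \<le> b'"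
    and "b > 0 \<Longrightarrow> b' > 0 \<Longrightarrow> c' / b' \<le> c / b"
  shows "a' + c' \<le> a + c"
proof (cases "b > 0 \<and> b' > 0")
  case True
  then have "a' + c' / b' * b' \<le> a + c / b * b"
    using assms by (intro convex_tail_mono) auto
  then show ?thesis
    using True by simp
next
  case False
  then show ?thesis
    using assms by linarith
qed

lemma measure_ge_add_01:
  fixes X X' :: "'a \<Rightarrow> int"
  assumes "finite_measure M"
    and [measurable]: "X \<in> measurable M (count_space UNIV)" "X' \<in> measurable M (count_space UNIV)"
    and "\<forall>\<omega>\<in>space M. X' \<omega> \<in> {0, 1}"
  shows "measure M {\<omega> \<in> space M. s \<le> X \<omega> + X' \<omega>} =
    measure M {\<omega> \<in> space M. s \<le> X \<omega>} +
    measure M ({\<omega> \<in> space M. X \<omega> = s - 1} \<inter> {\<omega> \<in> space M. 1 \<le> X' \<omega>})"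
proof -
  interpret finite_measure M by fact
  have "{\<omega> \<in> space M. s \<le> X \<omega> + X' \<omega>} = {\<omega> \<in> space M. s \<le> X \<omega>} \<union>
      ({\<omega> \<in> space M. X \<omega> = s - 1} \<inter> {\<omega> \<in> space M. 1 \<le> X' \<omega>})"
    using assms(4) by force
  then show ?thesis
    by (simp add: finite_measure_Union disjoint_iff)
qed

lemma measure_ge_pred:
  fixes X :: "'a \<Rightarrow> int"
  assumes "finite_measure M" and [measurable]: "X \<in> measurable M (count_space UNIV)"
  shows "measure M {\<omega> \<in> space M. s - 1 \<le> X \<omega>} =
    measure M {\<omega> \<in> space M. s \<le> X \<omega>} + measure M {\<omega> \<in> space M. X \<omega> = s - 1}"
proof -
  interpret finite_measure M by fact
  have "{\<omega> \<in> space M. s - 1 \<le> X \<omega>} =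
      {\<omega> \<in> space M. s \<le> X \<omega>} \<union> {\<omega> \<in> space M. X \<omega> = s - 1}"
    by auto
  then show ?thesis
    by (simp add: finite_measure_Union disjoint_iff)
qed

lemma stoch_dom_uniform_measure_ratio:
  fixes X' :: "'a \<Rightarrow> int" and Y' :: "'b \<Rightarrow> int"
  assumes "finite_measure M" "finite_measure N"
    and [measurable]: "X' \<in> measurable M (count_space UNIV)" "Y' \<in> measurable N (count_space UNIV)"
    and "A \<in> sets M" "B \<in> sets N" "measure M A > 0" "measure N B > 0"
    and "stoch_dom (uniform_measure M A) X' (uniform_measure N B) Y'"
  shows "measure N (B \<inter> {\<omega> \<in> space N. s \<le> Y' \<omega>}) / measure N B
    \<le> measure M (A \<inter> {\<omega> \<in> space M. s \<le> X' \<omega>}) / measure M A"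
proof -
  interpret M: finite_measure M by fact
  interpret N: finite_measure N by fact
  have "emeasure M A \<noteq> 0" "emeasure N B \<noteq> 0"
    using assms(7,8) by (auto simp: M.emeasure_eq_measure N.emeasure_eq_measure)
  then show ?thesis
    using assms(9) unfolding stoch_dom_iff_int_thresholds
    by (auto simp: M.emeasure_eq_measure N.emeasure_eq_measure)
qed

theorem lemma3p7:
  fixes M :: "'a measure" and N :: "'b measure"
    and X X' :: "'a \<Rightarrow> int" and Y Y' :: "'b \<Rightarrow> int"
  assumes "prob_space M" and "prob_space N"
    and "X \<in> measurable M (count_space UNIV)" and "X' \<in> measurable M (count_space UNIV)"
    and "Y \<in> measurable N (count_space UNIV)" and "Y' \<in> measurable N (count_space UNIV)"
    and "\<forall>\<omega>\<in>space M. X' \<omega> \<in> {0, 1}" and "\<forall>\<omega>\<in>space N. Y' \<omega> \<in> {0, 1}"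
    and "stoch_dom M X N Y"
    and "\<forall>x::int. measure M {\<omega> \<in> space M. X \<omega> = x} > 0 \<and> measure N {\<omega> \<in> space N. Y \<omega> = x} > 0
           \<longrightarrow> stoch_dom (uniform_measure M {\<omega> \<in> space M. X \<omega> = x}) X'
                        (uniform_measure N {\<omega> \<in> space N. Y \<omega> = x}) Y'"
  shows "stoch_dom M (\<lambda>\<omega>. X \<omega> + X' \<omega>) N (\<lambda>\<omega>. Y \<omega> + Y' \<omega>)"
  unfolding stoch_dom_iff_int_thresholds
proof
  fix s :: int
  note [measurable] = assms(3-6)
  interpret M: prob_space M by fact
  interpret N: prob_space N by fact
  let ?A = "{\<omega> \<in> space M. X \<omega> = s - 1}" and ?B = "{\<omega> \<in> space N. Y \<omega> = s - 1}"
  have tails: "measure N {\<omega> \<in> space N. r \<le> Y \<omega>} \<le> measure M {\<omega> \<in> space M. r \<le> X \<omega>}" for r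
    using assms(9) by (simp add: stoch_dom_iff_int_thresholds)
  have tails_pred: "measure N {\<omega> \<in> space N. s \<le> Y \<omega>} + measure N ?B
      \<le> measure M {\<omega> \<in> space M. s \<le> X \<omega>} + measure M ?A"
    using tails[of "s - 1"] measure_ge_pred[OF M.finite_measure_axioms assms(3)]
      measure_ge_pred[OF N.finite_measure_axioms assms(5)]
    by simp
  have conditional: "measure N (?B \<inter> {\<omega> \<in> space N. 1 \<le> Y' \<omega>}) / measure N ?B
      \<le> measure M (?A \<inter> {\<omega> \<in> space M. 1 \<le> X' \<omega>}) / measure M ?A"
    if "measure M ?A > 0" "measure N ?B > 0"
    using that assms(10)
    by (intro stoch_dom_uniform_measure_ratio[OF M.finite_measure_axioms N.finite_measure_axioms
          assms(4,6)]) auto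
  have "measure N {\<omega> \<in> space N. s \<le> Y \<omega>} + measure N (?B \<inter> {\<omega> \<in> space N. 1 \<le> Y' \<omega>})
      \<le> measure M {\<omega> \<in> space M. s \<le> X \<omega>} + measure M (?A \<inter> {\<omega> \<in> space M. 1 \<le> X' \<omega>})"
    by (rule tail_add_ratio_mono[OF tails tails_pred _ _ _ _ conditional])
      (auto intro!: M.finite_measure_mono N.finite_measure_mono)
  then show "measure N {\<omega> \<in> space N. s \<le> Y \<omega> + Y' \<omega>}
      \<le> measure M {\<omega> \<in> space M. s \<le> X \<omega> + X' \<omega>}"
    by (simp add: measure_ge_add_01[OF M.finite_measure_axioms assms(3,4,7)]
        measure_ge_add_01[OF N.finite_measure_axioms assms(5,6,8)])
qed

end
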